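(* For any $\bm x \in \Delta_n \setminus \{\bm e_1,\dots,\bm e_n,\tfrac1n\bm e\}$ and any integer $p\geqslant 2$, $$\frac{p}{p-1}\left[\frac{-\ln\|\bm x\|_p}{1-\|\bm x\|_p}\right] - \ln n\left[1 + \frac{1}{D_p}\right] < 0.$$
   Context: For $\bm x \in \mathbb{R}^n_{\geqslant 0}$ and $p\geqslant 1$, $\|\bm x\|_p = (\sum_{i=1}^n x_i^p)^{1/p}$, and $D_p = n^{1-1/p}-1$. $\Delta_n = \{\bm x \in \mathbb{R}^n_{\geqslant 0} : \sum_{i=1}^n x_i = 1\}$, $\bm e_i$ is the $i$-th standard unit vector and $\bm e$ the all-ones vector in $\mathbb{R}^n$. *)

theory Defs
  imports "HOL-Analysis.Analysis"
begin

text \<open>Vectors in R^n are represented as functions nat => real, indexed by {0..<n}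
 (index i corresponds to coordinate i+1 of the paper).\<close>

definition pnorm :: "nat \<Rightarrow> real \<Rightarrow> (nat \<Rightarrow> real) \<Rightarrow> real" where
  "pnorm n p x = (\<Sum>i<n. x i powr p) powr (1 / p)"

definition Dp :: "nat \<Rightarrow> real \<Rightarrow> real" where
  "Dp n p = real n powr (1 - 1 / p) - 1"

definition std_simplex_n :: "nat \<Rightarrow> (nat \<Rightarrow> real) set" where
  "std_simplex_n n = {x. (\<forall>i<n. x i \<ge> 0) \<and> (\<forall>i\<ge>n. x i = 0) \<and> (\<Sum>i<n. x i) = 1}"

definition unitvec :: "nat \<Rightarrow> nat \<Rightarrow> real" where
  "unitvec j = (\<lambda>i. if i = j then 1 else 0)"

definition bary_n :: "nat \<Rightarrow> nat \<Rightarrow> real" where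
  "bary_n n = (\<lambda>i. if i < n then 1 / real n else 0)"

end

theory Submission
  imports Defs
begin

text \<open>Write \<open>t = \<parallel>x\<parallel>\<^sub>p\<close> and \<open>m = n\<^bsup>1-1/p\<^esup> = D\<^sub>p + 1\<close>.
  Since \<open>x\<close> is not a vertex, some coordinate lies strictly between 0 and 1, and \<open>\<Sum> x\<^sub>i\<^sup>p < \<Sum> x\<^sub>i = 1\<close>,
  i.e. \<open>t < 1\<close>; since \<open>x\<close> is not the barycentre, strict convexity of \<open>u \<mapsto> u\<^sup>p\<close> (its tangent
  line at \<open>1/n\<close>, via a strict Bernoulli inequality) gives \<open>\<Sum> x\<^sub>i\<^sup>p > n\<^bsup>1-p\<^esup>\<close>, i.e. \<open>t > 1/m\<close>.
  The function \<open>-ln t / (1 - t)\<close> is strictly decreasing on \<open>(0,1)\<close> by strict concavity of \<open>ln\<close>,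
  so it is below its value \<open>(1 - 1/p) ln n \<cdot> m/(m - 1)\<close> at \<open>1/m\<close>, and multiplying by \<open>p/(p-1)\<close>
  gives exactly \<open>ln n (1 + 1/D\<^sub>p)\<close>.\<close>

lemma Bernoulli_inequality_strict:
  fixes h :: "'a :: linordered_field"
  assumes "-1 \<le> h" "h \<noteq> 0" "2 \<le> n"
  shows "1 + of_nat n * h < (1 + h) ^ n"
proof -
  obtain m where n: "n = Suc m" and "1 \<le> m" using assms(3) by (cases n) auto
  have "1 + of_nat n * h < 1 + of_nat n * h + of_nat m * h\<^sup>2"
    using \<open>1 \<le> m\<close> assms(2) by simp
  also have "\<dots> = (1 + h) * (1 + of_nat m * h)"
    by (simp add: n algebra_simps power2_eq_square)
  also have "\<dots> \<le> (1 + h) ^ n"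
    using Bernoulli_inequality[OF assms(1), of m] assms(1) by (simp add: n mult_left_mono)
  finally show ?thesis .
qed

lemma power_gt_tangent:
  fixes a x :: "'a :: linordered_field"
  assumes "0 < a" "0 \<le> x" "x \<noteq> a" "2 \<le> n"
  shows "a ^ n + of_nat n * a ^ (n - 1) * (x - a) < x ^ n"
proof -
  define h where "h = x / a - 1"
  have x: "x = a * (1 + h)" using assms(1) by (simp add: h_def field_simps)
  have "-1 \<le> h" "h \<noteq> 0" using assms by (simp_all add: h_def field_simps)
  have "a ^ n + of_nat n * a ^ (n - 1) * (x - a) = a ^ n * (1 + of_nat n * h)"
    using assms(4) by (cases n) (simp_all add: x algebra_simps)
  also have "\<dots> < a ^ n * (1 + h) ^ n"
    using Bernoulli_inequality_strict[OF \<open>-1 \<le> h\<close> \<open>h \<noteq> 0\<close> assms(4)] assms(1) by simp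
  also have "\<dots> = x ^ n" by (simp add: x power_mult_distrib)
  finally show ?thesis .
qed

lemma neg_ln_div_one_minus_strict_antimono:
  fixes s t :: real
  assumes "0 < s" "s < t" "t < 1"
  shows "- ln t / (1 - t) < - ln s / (1 - s)"
proof -
  define l where "l = (1 - t) / (1 - s)"
  have l: "0 < l" "l < 1" using assms by (auto simp: l_def field_simps)
  have "l * (1 - s) = 1 - t" using assms by (simp add: l_def)
  then have t: "t = l * s + (1 - l)" by (simp add: algebra_simps)
  have "l * (ln s - ln t) + (1 - l) * (ln 1 - ln t) < l * ((s - t) / t) + (1 - l) * ((1 - t) / t)"
    using ln_diff_le[of s t] ln_diff_less[of 1 t] assms l
    by (intro add_le_less_mono mult_left_mono mult_strict_left_mono) auto
  also have "\<dots> = 0" using assms by (simp add: t field_simps)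
  finally have "- ln t < l * (- ln s)" by (simp add: algebra_simps)
  then show ?thesis using assms by (simp add: l_def field_simps)
qed

lemma std_simplex_nD:
  assumes "x \<in> std_simplex_n n"
  shows "\<And>i. i < n \<Longrightarrow> 0 \<le> x i" "\<And>i. n \<le> i \<Longrightarrow> x i = 0" "(\<Sum>i<n. x i) = 1"
  using assms by (auto simp: std_simplex_n_def)

lemma std_simplex_n_le_one:
  assumes "x \<in> std_simplex_n n" "i < n"
  shows "x i \<le> 1"
proof -
  have "x i \<le> (\<Sum>i<n. x i)"
    using assms std_simplex_nD(1)[OF assms(1)] by (intro member_le_sum) auto
  then show ?thesis using std_simplex_nD(3)[OF assms(1)] by simp
qed

lemma std_simplex_n_eq_unitvec:
  assumes x: "x \<in> std_simplex_n n" and "j < n" "x j = 1"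
  shows "x = unitvec j"
proof
  fix i
  have rest: "(\<Sum>i\<in>{..<n} - {j}. x i) = 0"
    using std_simplex_nD(3)[OF x] assms(2,3) by (simp add: sum.remove)
  show "x i = unitvec j i"
  proof (cases "i < n \<and> i \<noteq> j")
    case True
    then have "x i \<le> (\<Sum>i\<in>{..<n} - {j}. x i)"
      using std_simplex_nD(1)[OF x] by (intro member_le_sum) auto
    then show ?thesis using True std_simplex_nD(1)[OF x, of i] rest by (simp add: unitvec_def)
  next
    case False
    then show ?thesis using assms(3) std_simplex_nD(2)[OF x, of i] by (auto simp: unitvec_def)
  qed
qed

lemma std_simplex_n_non_vertex:
  assumes x: "x \<in> std_simplex_n n" and "\<forall>j<n. x \<noteq> unitvec j"
  obtains i where "i < n" "0 < x i" "x i < 1"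
proof -
  obtain i where "i < n" "x i \<noteq> 0"
    using std_simplex_nD(3)[OF x] by (metis (no_types, lifting) lessThan_iff sum.neutral zero_neq_one)
  moreover have "x i \<noteq> 1" using std_simplex_n_eq_unitvec[OF x \<open>i < n\<close>] assms(2) \<open>i < n\<close> by blast
  ultimately show ?thesis
    using that std_simplex_nD(1)[OF x] std_simplex_n_le_one[OF x] by force
qed

lemma pnorm_eq_sum_power:
  assumes "\<And>i. i < n \<Longrightarrow> 0 \<le> x i" "0 < p"
  shows "pnorm n (real p) x = (\<Sum>i<n. x i ^ p) powr (1 / real p)"
proof -
  have "x i powr real p = x i ^ p" if "i < n" for i
    using assms(1)[OF that] assms(2) by (cases "x i = 0") (simp_all add: powr_realpow)
  then show ?thesis unfolding pnorm_def by simp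
qed

lemma sum_power_less_one:
  assumes x: "x \<in> std_simplex_n n" and "i < n" "0 < x i" "x i < 1" "2 \<le> p"
  shows "(\<Sum>i<n. x i ^ p) < 1"
proof -
  have "(\<Sum>i<n. x i ^ p) < (\<Sum>i<n. x i)"
  proof (rule sum_strict_mono_ex1)
    show "\<forall>k\<in>{..<n}. x k ^ p \<le> x k"
      using std_simplex_nD(1)[OF x] std_simplex_n_le_one[OF x] power_decreasing[of 1 p] assms(5)
      by (metis One_nat_def lessThan_iff one_le_numeral order_trans power_one_right)
    show "\<exists>k\<in>{..<n}. x k ^ p < x k"
      using assms(2-5) power_strict_decreasing[of 1 p "x i"] by auto
  qed simp
  then show ?thesis using std_simplex_nD(3)[OF x] by simp
qed

lemma sum_power_gt_bary:
  assumes x: "x \<in> std_simplex_n n" and "x \<noteq> bary_n n" "2 \<le> p"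
  shows "real n * (1 / real n) ^ p < (\<Sum>i<n. x i ^ p)"
proof -
  define a where "a = 1 / real n"
  have "0 < n" using std_simplex_nD(3)[OF x] by (cases n) auto
  then have "0 < a" by (simp add: a_def)
  obtain i where "i < n" "x i \<noteq> a"
    using assms(2) std_simplex_nD(2)[OF x] unfolding a_def bary_n_def by fastforce
  have tangent: "a ^ p + real p * a ^ (p - 1) * (x k - a) \<le> x k ^ p" if "k < n" for k
    using power_gt_tangent[OF \<open>0 < a\<close> std_simplex_nD(1)[OF x that] _ assms(3)]
    by (cases "x k = a") (simp_all add: less_imp_le)
  have "real n * a ^ p = (\<Sum>k<n. a ^ p + real p * a ^ (p - 1) * (x k - a))"
    using std_simplex_nD(3)[OF x] \<open>0 < n\<close>
    by (simp add: sum.distrib sum_subtractf flip: sum_distrib_left) (simp add: a_def)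
  also have "\<dots> < (\<Sum>k<n. x k ^ p)"
    using tangent power_gt_tangent[OF \<open>0 < a\<close> std_simplex_nD(1)[OF x \<open>i < n\<close>] \<open>x i \<noteq> a\<close> assms(3)]
      \<open>i < n\<close> by (intro sum_strict_mono_ex1) auto
  finally show ?thesis by (simp add: a_def)
qed

lemma pnorm_less_one:
  assumes x: "x \<in> std_simplex_n n" and "i < n" "0 < x i" "x i < 1" "2 \<le> p"
  shows "pnorm n (real p) x < 1"
proof -
  have "0 \<le> (\<Sum>i<n. x i ^ p)" using std_simplex_nD(1)[OF x] by (intro sum_nonneg) auto
  then have "(\<Sum>i<n. x i ^ p) powr (1 / real p) < 1 powr (1 / real p)"
    using sum_power_less_one[OF assms] assms(5) by (intro powr_less_mono2) auto
  then show ?thesis using pnorm_eq_sum_power[OF std_simplex_nD(1)[OF x]] assms(5) by simp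
qed

lemma pnorm_gt_bary:
  assumes x: "x \<in> std_simplex_n n" and "x \<noteq> bary_n n" "2 \<le> p"
  shows "1 / real n powr (1 - 1 / real p) < pnorm n (real p) x"
proof -
  have "0 < n" using std_simplex_nD(3)[OF x] by (cases n) auto
  have "1 / real n powr (1 - 1 / real p) = (real n * (1 / real n) ^ p) powr (1 / real p)"
  proof -
    have "real n * (1 / real n) ^ p = real n powr (1 - real p)"
      using \<open>0 < n\<close> by (simp add: powr_diff powr_realpow power_one_over)
    moreover have "(1 - real p) * (1 / real p) = - (1 - 1 / real p)"
      using assms(3) by (simp add: field_simps)
    ultimately have "(real n * (1 / real n) ^ p) powr (1 / real p) = real n powr (- (1 - 1 / real p))"
      by (simp only: powr_powr)
    then show ?thesis by (simp only: powr_minus_divide)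
  qed
  also have "\<dots> < (\<Sum>i<n. x i ^ p) powr (1 / real p)"
    using sum_power_gt_bary[OF assms] \<open>0 < n\<close> assms(3) by (intro powr_less_mono2) auto
  also have "\<dots> = pnorm n (real p) x"
    using pnorm_eq_sum_power[OF std_simplex_nD(1)[OF x]] assms(3) by simp
  finally show ?thesis .
qed

lemma neg_ln_div_one_minus_eq_Dp:
  fixes p :: real
  assumes "2 \<le> n" "1 < p"
  shows "p / (p - 1) * (- ln (1 / real n powr (1 - 1 / p)) / (1 - 1 / real n powr (1 - 1 / p)))
         = ln (real n) * (1 + 1 / Dp n p)"
proof -
  define m where "m = real n powr (1 - 1 / p)"
  have "1 < m" unfolding m_def using assms by (intro gr_one_powr) (auto simp: field_simps)
  have "Dp n p = m - 1" unfolding Dp_def m_def ..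
  have "- ln (1 / m) = (1 - 1 / p) * ln (real n)"
    using assms by (simp add: m_def ln_div ln_powr)
  then have "p / (p - 1) * (- ln (1 / m) / (1 - 1 / m))
      = (p / (p - 1) * (1 - 1 / p)) * ln (real n) * (1 / (1 - 1 / m))"
    by simp
  also have "p / (p - 1) * (1 - 1 / p) = 1" using assms by (simp add: field_simps)
  also have "1 / (1 - 1 / m) = 1 + 1 / Dp n p"
    using \<open>1 < m\<close> \<open>Dp n p = m - 1\<close> by (simp add: field_simps)
  finally show ?thesis unfolding m_def by simp
qed

theorem lemma1:
  fixes n p :: nat and x :: "nat \<Rightarrow> real"
  assumes "x \<in> std_simplex_n n"
    and "\<forall>j<n. x \<noteq> unitvec j"
    and "x \<noteq> bary_n n"
    and "p \<ge> 2"
  shows "real p / (real p - 1) * (- ln (pnorm n (real p) x) / (1 - pnorm n (real p) x))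
         - ln (real n) * (1 + 1 / Dp n (real p)) < 0"
proof -
  obtain i where i: "i < n" "0 < x i" "x i < 1"
    using std_simplex_n_non_vertex[OF assms(1,2)] by blast
  have "2 \<le> n"
  proof (rule ccontr)
    assume "\<not> 2 \<le> n"
    with i have "n = 1" "i = 0" by auto
    then show False using std_simplex_nD(3)[OF assms(1)] i(3) by simp
  qed
  define t where "t = pnorm n (real p) x"
  define m where "m = real n powr (1 - 1 / real p)"
  have "0 < 1 / m" using \<open>2 \<le> n\<close> by (simp add: m_def)
  then have "- ln t / (1 - t) < - ln (1 / m) / (1 - 1 / m)"
    using pnorm_gt_bary[OF assms(1,3,4)] pnorm_less_one[OF assms(1) i assms(4)]
    unfolding t_def m_def by (intro neg_ln_div_one_minus_strict_antimono)
  moreover have "0 < real p / (real p - 1)" using assms(4) by simp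
  ultimately have "real p / (real p - 1) * (- ln t / (1 - t))
      < real p / (real p - 1) * (- ln (1 / m) / (1 - 1 / m))"
    by (rule mult_strict_left_mono)
  also have "\<dots> = ln (real n) * (1 + 1 / Dp n (real p))"
    unfolding m_def using \<open>2 \<le> n\<close> assms(4) by (intro neg_ln_div_one_minus_eq_Dp) auto
  finally show ?thesis unfolding t_def by simp
qed

end
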